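(* Let $E:\mathbb R^N\to\mathbb R$ be a function which is analytic at a local minimum $\mathbf p$, and let $j,k\ge1$ be integers. Suppose there exists a $(j,2k)$ $E$-flex $\mathbf p(t)$ at $\mathbf p$. Then $E$ grows sometimes-$s$-slowly at $\mathbf p$, where $s=\frac{2k+2}{j}$.
   Context: A trajectory at $\mathbf p$ is an analytic non-constant map $t\mapsto\mathbf p(t)\in\mathbb R^N$, defined for $t\in[0,\varepsilon]$ for some $\varepsilon>0$, with $\mathbf p(0)=\mathbf p$. A $C^k$ function $\varphi(t)$ is $k$-vanishing if $\varphi^{(i)}(0)=0$ for $1\le i\le k$, and $k$-active if $(k-1)$-vanishing but not $k$-vanishing. A $(j,k)$ $E$-flex at $\mathbf p$ is a $j$-active trajectory $\mathbf p(t)$ at $\mathbf p$ such that $E(\mathbf p(t))$ is $k$-vanishing. $E$ grows sometimes-$s$-slowly at $\mathbf p$ if there exist a trajectory $\mathbf q(t)$ at $\mathbf p$ and constants $c_2,\delta>0$ such that $E(\mathbf q(t))-E(\mathbf p)\le c_2|\mathbf q(t)-\mathbf p|^s$ for $t\in[0,\delta]$. *)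

theory Defs
  imports "HOL-Analysis.Analysis"
begin

definition real_analytic_on_interval ::
  "(real \<Rightarrow> 'a::real_normed_vector) \<Rightarrow> real \<Rightarrow> real \<Rightarrow> bool" where
  "real_analytic_on_interval q a b \<longleftrightarrow>
     (\<forall>t0\<in>{a..b}. \<exists>r>0. \<exists>c::nat \<Rightarrow> 'a.
        \<forall>t\<in>{a..b} \<inter> ball t0 r. (\<lambda>k. ((t - t0) ^ k) *\<^sub>R c k) sums q t)"

definition real_analytic_at :: "(real ^ 'n \<Rightarrow> real) \<Rightarrow> real ^ 'n \<Rightarrow> bool" where
  "real_analytic_at E p \<longleftrightarrow>
     (\<exists>r>0. \<exists>c::('n \<Rightarrow> nat) \<Rightarrow> real.
        \<forall>x\<in>ball p r.
          ((\<lambda>\<alpha>. c \<alpha> * (\<Prod>i\<in>UNIV. (x $ i - p $ i) ^ \<alpha> i)) has_sum E x) UNIV)"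

definition trajectory :: "(real \<Rightarrow> real ^ 'n) \<Rightarrow> real ^ 'n \<Rightarrow> bool" where
  "trajectory q p \<longleftrightarrow>
     (\<exists>\<epsilon>>0. real_analytic_on_interval q 0 \<epsilon> \<and> q 0 = p \<and> (\<exists>t\<in>{0..\<epsilon>}. q t \<noteq> p))"

definition k_vanishing :: "nat \<Rightarrow> (real \<Rightarrow> 'a::real_normed_vector) \<Rightarrow> bool" where
  "k_vanishing k \<phi> \<longleftrightarrow>
     (\<exists>\<delta>>0. \<exists>D::nat \<Rightarrow> real \<Rightarrow> 'a.
        (\<forall>t\<in>{0..\<delta>}. D 0 t = \<phi> t) \<and>
        (\<forall>i<k. \<forall>t\<in>{0..\<delta>}. (D i has_vector_derivative D (Suc i) t) (at t within {0..\<delta>})) \<and>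
        continuous_on {0..\<delta>} (D k) \<and>
        (\<forall>i\<in>{1..k}. D i 0 = 0))"

definition k_active :: "nat \<Rightarrow> (real \<Rightarrow> 'a::real_normed_vector) \<Rightarrow> bool" where
  "k_active k \<phi> \<longleftrightarrow> k_vanishing (k - 1) \<phi> \<and> \<not> k_vanishing k \<phi>"

definition E_flex :: "nat \<Rightarrow> nat \<Rightarrow> (real ^ 'n \<Rightarrow> real) \<Rightarrow> real ^ 'n \<Rightarrow> (real \<Rightarrow> real ^ 'n) \<Rightarrow> bool" where
  "E_flex j k E p q \<longleftrightarrow> trajectory q p \<and> k_active j q \<and> k_vanishing k (\<lambda>t. E (q t))"

definition grows_sometimes_slowly :: "real \<Rightarrow> (real ^ 'n \<Rightarrow> real) \<Rightarrow> real ^ 'n \<Rightarrow> bool" where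
  "grows_sometimes_slowly s E p \<longleftrightarrow>
     (\<exists>q. trajectory q p \<and> (\<exists>c2>0. \<exists>\<delta>>0.
        \<forall>t\<in>{0..\<delta>}. E (q t) - E p \<le> c2 * norm (q t - p) powr s))"

definition local_min :: "(real ^ 'n \<Rightarrow> real) \<Rightarrow> real ^ 'n \<Rightarrow> bool" where
  "local_min E p \<longleftrightarrow> (\<exists>r>0. \<forall>x\<in>ball p r. E p \<le> E x)"

end

(*
  Write the flex as p(t) = p + U(t), where the components of U are convergent power series
  without constant term; these series also define U for negative t. Truncating the Taylor
  series of E at degree 2k + 2 yields an analytic function H of t with
  E(p + U(t)) - E(p) = H(t) + O(t^(2k+2)). As E(p(t)) is 2k-vanishing, the coefficients of H
  up to degree 2k vanish. As p is a local minimum, E(p + U(t)) - E(p) >= 0 for t of both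
  signs, which kills the coefficient of the odd power t^(2k+1) as well. Hence
  E(p(t)) - E(p) = O(t^(2k+2)), while j-activity of the flex gives |p(t) - p| >= a t^j.
  Eliminating t gives the exponent (2k+2)/j.
*)

theory Submission
  imports Defs "HOL-Complex_Analysis.Laurent_Convergence"
begin

(* Formal_Laurent_Series leaves the infix "$" for fps_nth active; it is needed for vectors. *)
unbundle no Formal_Power_Series.fps_syntax

section \<open>Real power series at the origin\<close>

lemma has_fps_expansion_factor_power:
  fixes f :: "'a::{banach,real_normed_field} \<Rightarrow> 'a"
  assumes f: "f has_fps_expansion F" and low: "\<And>i. i < m \<Longrightarrow> fps_nth F i = 0"
  obtains g where "(g \<longlongrightarrow> fps_nth F m) (nhds 0)" "\<forall>\<^sub>F t in nhds 0. f t = t ^ m * g t"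
proof
  have radius: "fps_conv_radius F > 0"
    using f by (simp add: has_fps_expansion_def)
  show "(eval_fps (fps_shift m F) \<longlongrightarrow> fps_nth F m) (nhds 0)"
  proof -
    have "isCont (eval_fps (fps_shift m F)) 0"
      using radius by (intro continuous_eval_fps) (simp add: zero_ereal_def)
    then have "(eval_fps (fps_shift m F) \<longlongrightarrow> eval_fps (fps_shift m F) 0) (nhds 0)"
      by (simp add: isCont_def tendsto_at_iff_tendsto_nhds)
    then show ?thesis by (simp add: eval_fps_at_0)
  qed
  show "\<forall>\<^sub>F t in nhds 0. f t = t ^ m * eval_fps (fps_shift m F) t"
  proof (cases "F = 0")
    case True
    with f have "\<forall>\<^sub>F t in nhds 0. 0 = f t" by (simp add: has_fps_expansion_def)
    then show ?thesis by (rule eventually_mono) (simp add: True)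
  next
    case False
    then have m: "m \<le> subdegree F" using low by (rule subdegree_geI)
    have "\<forall>\<^sub>F t in nhds 0. t \<in> eball 0 (fps_conv_radius F)"
      using radius by (intro eventually_nhds_in_open) (auto simp: zero_ereal_def)
    moreover have "\<forall>\<^sub>F t in nhds 0. eval_fps F t = f t"
      using f by (simp add: has_fps_expansion_def)
    ultimately show ?thesis
    proof eventually_elim
      case (elim t)
      then show ?case
        using m low by (cases "t = 0") (auto simp: eval_fps_shift eval_fps_at_0 power_0_left)
    qed
  qed
qed

lemma has_fps_expansion_upper_bound_power:
  fixes f :: "real \<Rightarrow> real"
  assumes f: "f has_fps_expansion F" and low: "\<And>i. i < m \<Longrightarrow> fps_nth F i = 0"
  obtains C where "\<forall>\<^sub>F t in nhds 0. \<bar>f t\<bar> \<le> C * \<bar>t\<bar> ^ m"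
proof -
  obtain g where g: "(g \<longlongrightarrow> fps_nth F m) (nhds 0)" "\<forall>\<^sub>F t in nhds 0. f t = t ^ m * g t"
    using has_fps_expansion_factor_power[OF f low] by blast
  have "\<forall>\<^sub>F t in nhds 0. dist (g t) (fps_nth F m) < 1"
    using g(1) by (rule tendstoD) simp
  with g(2) have "\<forall>\<^sub>F t in nhds 0. \<bar>f t\<bar> \<le> (\<bar>fps_nth F m\<bar> + 1) * \<bar>t\<bar> ^ m"
  proof eventually_elim
    case (elim t)
    then have "\<bar>g t\<bar> \<le> \<bar>fps_nth F m\<bar> + 1" by (simp add: dist_real_def)
    then have "\<bar>g t\<bar> * \<bar>t\<bar> ^ m \<le> (\<bar>fps_nth F m\<bar> + 1) * \<bar>t\<bar> ^ m"
      by (rule mult_right_mono) simp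
    with elim(1) show ?case by (simp add: abs_mult power_abs mult.commute)
  qed
  then show ?thesis by (rule that)
qed

lemma has_fps_expansion_lower_bound_subdegree:
  fixes f :: "real \<Rightarrow> real"
  assumes f: "f has_fps_expansion F" and "F \<noteq> 0"
  obtains a where "a > 0" "\<forall>\<^sub>F t in nhds 0. a * \<bar>t\<bar> ^ subdegree F \<le> \<bar>f t\<bar>"
proof -
  define a where "a = \<bar>fps_nth F (subdegree F)\<bar> / 2"
  have a: "a > 0" using \<open>F \<noteq> 0\<close> by (simp add: a_def)
  obtain g where g: "(g \<longlongrightarrow> fps_nth F (subdegree F)) (nhds 0)"
      "\<forall>\<^sub>F t in nhds 0. f t = t ^ subdegree F * g t"
    by (rule has_fps_expansion_factor_power[OF f nth_less_subdegree_zero])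
  have "\<forall>\<^sub>F t in nhds 0. dist (g t) (fps_nth F (subdegree F)) < a"
    using g(1) a by (rule tendstoD)
  with g(2) have "\<forall>\<^sub>F t in nhds 0. a * \<bar>t\<bar> ^ subdegree F \<le> \<bar>f t\<bar>"
  proof eventually_elim
    case (elim t)
    then have "a \<le> \<bar>g t\<bar>" unfolding dist_real_def a_def by linarith
    then have "a * \<bar>t\<bar> ^ subdegree F \<le> \<bar>g t\<bar> * \<bar>t\<bar> ^ subdegree F"
      by (rule mult_right_mono) simp
    with elim(1) show ?case by (simp add: abs_mult power_abs mult.commute)
  qed
  with a show ?thesis by (rule that)
qed

lemma has_fps_expansion_nth_eq_0_if_flat:
  fixes f :: "real \<Rightarrow> real"
  assumes f: "f has_fps_expansion F" and flat: "((\<lambda>t. f t / t ^ n) \<longlongrightarrow> 0) (at_right 0)"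
  shows "i \<le> n \<Longrightarrow> fps_nth F i = 0"
proof (induction i rule: less_induct)
  case (less i)
  have low: "\<And>j. j < i \<Longrightarrow> fps_nth F j = 0"
    using less by simp
  obtain g where g: "(g \<longlongrightarrow> fps_nth F i) (nhds 0)" "\<forall>\<^sub>F t in nhds 0. f t = t ^ i * g t"
    by (rule has_fps_expansion_factor_power[OF f low])
  have "(g \<longlongrightarrow> fps_nth F i) (at_right 0)"
    using g(1) by (rule tendsto_mono[OF at_within_le_nhds])
  moreover have "(g \<longlongrightarrow> 0) (at_right 0)"
  proof (rule tendsto_cong[THEN iffD1])
    show "((\<lambda>t. f t / t ^ n * t ^ (n - i)) \<longlongrightarrow> 0) (at_right 0)"
      using tendsto_mult[OF flat tendsto_power[OF tendsto_ident_at, of "n - i" 0 "{0<..}"]] by simp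
    have "\<forall>\<^sub>F t in at_right 0. f t = t ^ i * g t"
      using g(2) by (rule filter_leD[OF at_within_le_nhds])
    with eventually_at_right_less
    show "\<forall>\<^sub>F t in at_right 0. f t / t ^ n * t ^ (n - i) = g t"
    proof eventually_elim
      case (elim t)
      then have "t ^ n = t ^ i * t ^ (n - i)" using less.prems by (simp flip: power_add)
      with elim show ?case by (simp add: field_simps)
    qed
  qed
  ultimately show ?case
    using tendsto_unique trivial_limit_at_right_real by blast
qed

lemma odd_power_mult_nonneg_imp_limit_eq_0:
  fixes g :: "real \<Rightarrow> real"
  assumes "odd m" and g: "(g \<longlongrightarrow> \<beta>) (nhds 0)"
    and nonneg: "\<forall>\<^sub>F t in nhds 0. 0 \<le> t ^ m * g t + K * \<bar>t\<bar> ^ Suc m"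
  shows "\<beta> = 0"
proof -
  have lim: "((\<lambda>t. g t + K * t) \<longlongrightarrow> \<beta>) (at 0 within A)" for A
    using tendsto_add[OF tendsto_mono[OF at_within_le_nhds g] tendsto_mult_right_zero[OF tendsto_ident_at]]
    by simp
  have near: "\<forall>\<^sub>F t in at 0 within A. 0 \<le> t ^ m * g t + K * \<bar>t\<bar> ^ Suc m" for A
    using nonneg by (rule filter_leD[OF at_within_le_nhds])
  have "\<forall>\<^sub>F t in at_right 0. 0 \<le> g t + K * t"
    using near eventually_at_right_less
  proof eventually_elim
    case (elim t)
    then have "0 \<le> t ^ m * (g t + K * t)" by (simp add: algebra_simps)
    moreover have "t ^ m > 0" using elim(2) by simp
    ultimately show ?case by (simp add: zero_le_mult_iff)
  qed
  then have "0 \<le> \<beta>"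
    using tendsto_lowerbound[OF lim] by simp
  moreover have "\<forall>\<^sub>F t in at_left 0. g t + K * t \<le> 0"
    using near eventually_at_left_real[of "-1" 0, simplified]
  proof eventually_elim
    case (elim t)
    then have "t ^ m = - ((- t) ^ m)"
      using \<open>odd m\<close> by simp
    with elim have "0 \<le> - ((- t) ^ m * (g t + K * t))" by (simp add: algebra_simps)
    moreover have "(- t) ^ m > 0" using elim(2) by simp
    ultimately show ?case by (simp add: mult_le_0_iff)
  qed
  then have "\<beta> \<le> 0"
    using tendsto_upperbound[OF lim] by simp
  ultimately show ?thesis by simp
qed

lemma nonneg_flat_fps_approx_bound:
  fixes \<phi> H :: "real \<Rightarrow> real"
  assumes H: "H has_fps_expansion F" and "even n"
    and approx: "\<forall>\<^sub>F t in nhds 0. \<bar>\<phi> t - H t\<bar> \<le> C * \<bar>t\<bar> ^ (n + 2)"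
    and flat: "((\<lambda>t. \<phi> t / t ^ n) \<longlongrightarrow> 0) (at_right 0)"
    and nonneg: "\<forall>\<^sub>F t in nhds 0. 0 \<le> \<phi> t"
  obtains C' where "\<forall>\<^sub>F t in nhds 0. \<bar>\<phi> t\<bar> \<le> C' * \<bar>t\<bar> ^ (n + 2)"
proof -
  have "((\<lambda>t. (\<phi> t - H t) / t ^ n) \<longlongrightarrow> 0) (at_right 0)"
  proof (rule Lim_null_comparison)
    show "\<forall>\<^sub>F t in at_right 0. norm ((\<phi> t - H t) / t ^ n) \<le> C * t\<^sup>2"
      using filter_leD[OF at_within_le_nhds approx] eventually_at_right_less
    proof eventually_elim
      case (elim t)
      then show ?case by (simp add: divide_le_eq power_add power2_eq_square mult_ac)
    qed
    show "((\<lambda>t. C * t\<^sup>2) \<longlongrightarrow> 0) (at_right 0)"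
      by (intro tendsto_eq_intros) auto
  qed
  from tendsto_diff[OF flat this] have "((\<lambda>t. H t / t ^ n) \<longlongrightarrow> 0) (at_right 0)"
    by (simp add: diff_divide_distrib)
  then have low: "fps_nth F i = 0" if "i \<le> n" for i
    using has_fps_expansion_nth_eq_0_if_flat[OF H] that by blast
  obtain g where g: "(g \<longlongrightarrow> fps_nth F (Suc n)) (nhds 0)" "\<forall>\<^sub>F t in nhds 0. H t = t ^ Suc n * g t"
    using has_fps_expansion_factor_power[OF H] low by (metis less_Suc_eq_le)
  have "\<forall>\<^sub>F t in nhds 0. 0 \<le> t ^ Suc n * g t + C * \<bar>t\<bar> ^ Suc (Suc n)"
    using nonneg approx g(2) by eventually_elim simp
  from odd_power_mult_nonneg_imp_limit_eq_0[OF _ g(1) this] \<open>even n\<close>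
  have "fps_nth F (Suc n) = 0" by simp
  with low have "fps_nth F i = 0" if "i < n + 2" for i
    using that less_Suc_eq_le by (cases "i = Suc n") auto
  then obtain C1 where C1: "\<forall>\<^sub>F t in nhds 0. \<bar>H t\<bar> \<le> C1 * \<bar>t\<bar> ^ (n + 2)"
    by (rule has_fps_expansion_upper_bound_power[OF H])
  have "\<forall>\<^sub>F t in nhds 0. \<bar>\<phi> t\<bar> \<le> (C + C1) * \<bar>t\<bar> ^ (n + 2)"
    using approx C1
  proof eventually_elim
    case (elim t)
    have "\<bar>\<phi> t\<bar> \<le> \<bar>\<phi> t - H t\<bar> + \<bar>H t\<bar>"
      using abs_triangle_ineq[of "\<phi> t - H t" "H t"] by simp
    with elim show ?case by (simp add: distrib_right)
  qed
  then show ?thesis by (rule that)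
qed

section \<open>Vanishing derivatives\<close>

lemma mvt_power_bound:
  fixes f f' :: "real \<Rightarrow> real"
  assumes deriv: "\<And>x. x \<in> {0..d} \<Longrightarrow> (f has_real_derivative f' x) (at x within {0..d})"
    and bound: "\<And>x. x \<in> {0..d} \<Longrightarrow> \<bar>f' x\<bar> \<le> e * x ^ i" and "0 \<le> e" and t: "t \<in> {0..d}"
  shows "\<bar>f t - f 0\<bar> \<le> e * t ^ Suc i"
proof -
  have "(f has_derivative (*) (f' x)) (at x within {0..t})" if "x \<in> {0..t}" for x
    using deriv[of x] that t by (auto simp: has_field_derivative_def intro: has_derivative_subset)
  then obtain x where x: "x \<in> {0..t}" and eq: "f t - f 0 = f' x * (t - 0)"
    using mvt_very_simple[of 0 t f "\<lambda>x. (*) (f' x)"] t by auto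
  have "\<bar>f t - f 0\<bar> = \<bar>f' x\<bar> * t"
    using eq t by (simp add: abs_mult)
  also have "\<dots> \<le> e * x ^ i * t"
    using bound[of x] x t by (intro mult_right_mono) auto
  also have "\<dots> \<le> e * t ^ i * t"
    using x \<open>0 \<le> e\<close> t by (intro mult_right_mono mult_left_mono power_mono) auto
  finally show ?thesis by (simp add: mult_ac)
qed

lemma k_vanishing_imp_flat:
  fixes \<phi> :: "real \<Rightarrow> real"
  assumes "k_vanishing n \<phi>"
  shows "((\<lambda>t. (\<phi> t - \<phi> 0) / t ^ n) \<longlongrightarrow> 0) (at_right 0)"
proof (rule tendstoI)
  fix e :: real assume "e > 0"
  obtain \<delta> D where "\<delta> > 0" and D0: "\<forall>t\<in>{0..\<delta>}. D 0 t = \<phi> t"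
    and D: "\<forall>i<n. \<forall>t\<in>{0..\<delta>}. (D i has_vector_derivative D (Suc i) t) (at t within {0..\<delta>})"
    and cont: "continuous_on {0..\<delta>} (D n)" and vanish: "\<forall>i\<in>{1..n}. D i 0 = (0::real)"
    using assms unfolding k_vanishing_def by blast
  have "(0::real) \<in> {0..\<delta>}" using \<open>\<delta> > 0\<close> by simp
  then obtain d where "d > 0" and d: "\<forall>t\<in>{0..\<delta>}. dist t 0 < d \<longrightarrow> dist (D n t) (D n 0) < e / 2"
    using cont half_gt_zero[OF \<open>e > 0\<close>] unfolding continuous_on_iff by blast
  define d' where "d' = min \<delta> (d / 2)"
  have "d' > 0" using \<open>\<delta> > 0\<close> \<open>d > 0\<close> by (simp add: d'_def)
  have bound: "\<bar>D (n - i) t - D (n - i) 0\<bar> \<le> e / 2 * t ^ i" if "i \<le> n" "t \<in> {0..d'}" for i t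
    using that
  proof (induction i arbitrary: t)
    case 0
    then have "dist (D n t) (D n 0) < e / 2"
      using d \<open>d > 0\<close> by (simp add: d'_def dist_real_def)
    then show ?case by (simp add: dist_real_def)
  next
    case (Suc i)
    show ?case
    proof (rule mvt_power_bound[where f' = "D (n - i)"])
      show "(D (n - Suc i) has_real_derivative D (n - i) x) (at x within {0..d'})" if "x \<in> {0..d'}" for x
        using D[rule_format, of "n - Suc i" x] Suc.prems that
        by (auto simp: d'_def Suc_diff_Suc has_real_derivative_iff_has_vector_derivative
            intro: has_vector_derivative_within_subset)
      show "\<bar>D (n - i) x\<bar> \<le> e / 2 * x ^ i" if "x \<in> {0..d'}" for x
        using Suc.IH[of x] Suc.prems vanish that by auto
    qed (use Suc.prems \<open>e > 0\<close> in auto)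
  qed
  have "\<forall>\<^sub>F t in at_right 0. t \<in> {0<..<d'}"
    using \<open>d' > 0\<close> by (rule eventually_at_right_real)
  then show "\<forall>\<^sub>F t in at_right 0. dist ((\<phi> t - \<phi> 0) / t ^ n) 0 < e"
  proof eventually_elim
    case (elim t)
    then have "\<bar>\<phi> t - \<phi> 0\<bar> \<le> e / 2 * t ^ n"
      using bound[of n t] D0 \<open>d' > 0\<close> by (auto simp: d'_def)
    moreover have "t ^ n > 0" "e * t ^ n > 0" using elim \<open>e > 0\<close> by simp_all
    ultimately show ?case by (simp add: pos_divide_less_eq dist_real_def)
  qed
qed

lemma has_vector_derivative_vec_lambda:
  assumes "\<And>l. (f l has_real_derivative f' l) (at t within S)"
  shows "((\<lambda>t. \<chi> l. f l t) has_vector_derivative (\<chi> l. f' l)) (at t within S)"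
proof -
  have vec_as_sum: "(\<chi> l. g l) = (\<Sum>l\<in>UNIV. g l *\<^sub>R axis l (1::real))" for g :: "'a \<Rightarrow> real"
    by (simp add: vec_eq_iff axis_def if_distrib cong: if_cong)
  have "((\<lambda>t. \<Sum>l\<in>UNIV. f l t *\<^sub>R axis l (1::real)) has_vector_derivative
        (\<Sum>l\<in>UNIV. f l t *\<^sub>R 0 + f' l *\<^sub>R axis l 1)) (at t within S)"
    by (intro has_vector_derivative_sum has_vector_derivative_scaleR assms has_vector_derivative_const)
  then show ?thesis by (simp add: vec_as_sum)
qed

lemma fps_conv_radius_higher_deriv:
  fixes F :: "'a::{banach,real_normed_field} fps"
  shows "fps_conv_radius F \<le> fps_conv_radius ((fps_deriv ^^ i) F)"
  by (induction i) (auto intro: order_trans[OF _ fps_conv_radius_deriv])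

lemma k_vanishing_if_fps_coeffs_vanish:
  fixes q :: "real \<Rightarrow> real ^ 'n" and G :: "'n \<Rightarrow> real fps"
  assumes "0 < T" and radius: "\<And>l. ereal T \<le> fps_conv_radius (G l)"
    and q: "\<And>t. t \<in> {0..T} \<Longrightarrow> q t = (\<chi> l. eval_fps (G l) t)"
    and vanish: "\<And>l i. i \<in> {1..j} \<Longrightarrow> fps_nth (G l) i = 0"
  shows "k_vanishing j q"
proof -
  define D where "D i t = (\<chi> l. eval_fps ((fps_deriv ^^ i) (G l)) t)" for i t
  have deriv: "(D i has_vector_derivative D (Suc i) t) (at t within S)" if "t \<in> {0..T/2}" for i t S
    unfolding D_def
  proof (rule has_vector_derivative_vec_lambda)
    fix l
    have "norm t < T" using that \<open>0 < T\<close> by auto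
    then have "ereal (norm t) < fps_conv_radius (G l)"
      by (intro order.strict_trans2[OF _ radius]) simp
    then have "norm t < fps_conv_radius ((fps_deriv ^^ i) (G l))"
      using fps_conv_radius_higher_deriv order.strict_trans2 by blast
    then show "(eval_fps ((fps_deriv ^^ i) (G l)) has_real_derivative
        eval_fps ((fps_deriv ^^ Suc i) (G l)) t) (at t within S)"
      by (simp add: has_field_derivative_eval_fps)
  qed
  show ?thesis
    unfolding k_vanishing_def
  proof (intro exI[of _ "T/2"] exI[of _ D] conjI ballI allI impI)
    show "0 < T / 2" using \<open>0 < T\<close> by simp
    show "D 0 t = q t" if "t \<in> {0..T/2}" for t
      using q[of t] that by (simp add: D_def)
    show "(D i has_vector_derivative D (Suc i) t) (at t within {0..T/2})" if "t \<in> {0..T/2}" for i t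
      using deriv that by blast
    show "continuous_on {0..T/2} (D j)"
      unfolding continuous_on_eq_continuous_within
      using has_vector_derivative_continuous[OF deriv] by blast
    show "D i 0 = 0" if "i \<in> {1..j}" for i
      using vanish that by (simp add: D_def vec_eq_iff eval_fps_at_0 fps_0th_higher_deriv)
  qed
qed

section \<open>Trajectories as power series curves\<close>

lemma trajectory_fps_components:
  fixes q :: "real \<Rightarrow> real ^ 'n"
  assumes "trajectory q p"
  obtains T and G :: "'n \<Rightarrow> real fps" where "0 < T" "\<And>l. ereal T \<le> fps_conv_radius (G l)"
    "\<And>l. fps_nth (G l) 0 = p $ l" "\<And>t. t \<in> {0..T} \<Longrightarrow> q t = (\<chi> l. eval_fps (G l) t)"
proof -
  obtain \<epsilon> where "\<epsilon> > 0" and analytic: "real_analytic_on_interval q 0 \<epsilon>" and "q 0 = p"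
    using assms unfolding trajectory_def by blast
  then obtain r c where "r > 0" and c: "\<forall>t\<in>{0..\<epsilon>} \<inter> ball 0 r. (\<lambda>k. (t - 0) ^ k *\<^sub>R c k) sums q t"
    unfolding real_analytic_on_interval_def by (meson atLeastAtMost_iff order_refl less_imp_le)
  define T where "T = min \<epsilon> (r / 2)"
  define G where "G l = Abs_fps (\<lambda>k. c k $ l)" for l
  have "0 < T" using \<open>\<epsilon> > 0\<close> \<open>r > 0\<close> by (simp add: T_def)
  have sums: "(\<lambda>k. fps_nth (G l) k * t ^ k) sums (q t $ l)" if "t \<in> {0..T}" for t l
  proof -
    have "t \<in> {0..\<epsilon>} \<inter> ball 0 r" using that \<open>r > 0\<close> by (auto simp: T_def dist_real_def)
    from sums_vec_nth[OF c[rule_format, OF this], of l] show ?thesis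
      by (simp add: G_def mult.commute)
  qed
  show ?thesis
  proof
    show "0 < T" by fact
    show "ereal T \<le> fps_conv_radius (G l)" for l
      using conv_radius_geI[OF sums_summable[OF sums[of T l]]] \<open>0 < T\<close> by (simp add: fps_conv_radius_def)
    show "q t = (\<chi> l. eval_fps (G l) t)" if "t \<in> {0..T}" for t
      using sums[OF that] by (simp add: vec_eq_iff eval_fps_def sums_iff)
    show "fps_nth (G l) 0 = p $ l" for l
      using sums[of 0 l] \<open>0 < T\<close> \<open>q 0 = p\<close> by (simp add: sums_iff eval_fps_def)
  qed
qed

lemma trajectory_displacement_fps:
  fixes q :: "real \<Rightarrow> real ^ 'n"
  assumes "trajectory q p" and "\<not> k_vanishing j q"
  obtains T U F m l where "0 < T" "\<And>t. t \<in> {0..T} \<Longrightarrow> q t = p + U t"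
    "\<And>l. (\<lambda>t. U t $ l) has_fps_expansion F l" "\<And>l. fps_nth (F l) 0 = 0"
    "m \<le> j" "fps_nth (F l) m \<noteq> 0"
proof -
  obtain T G where "0 < T" and radius: "\<And>l. ereal T \<le> fps_conv_radius (G l)"
    and G0: "\<And>l. fps_nth (G l) 0 = p $ l" and q: "\<And>t. t \<in> {0..T} \<Longrightarrow> q t = (\<chi> l. eval_fps (G l) t)"
    using trajectory_fps_components[OF assms(1)] by blast
  obtain l m where "m \<in> {1..j}" "fps_nth (G l) m \<noteq> 0"
    using k_vanishing_if_fps_coeffs_vanish[OF \<open>0 < T\<close> radius q] assms(2) by blast
  show ?thesis
  proof
    show "0 < T" by fact
    show "q t = p + (\<chi> l. eval_fps (G l) t - p $ l)" if "t \<in> {0..T}" for t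
      using q[OF that] by (simp add: vec_eq_iff)
    show "(\<lambda>t. (\<chi> l. eval_fps (G l) t - p $ l) $ l) has_fps_expansion G l - fps_const (p $ l)" for l
    proof -
      have "0 < fps_conv_radius (G l)"
        using \<open>0 < T\<close> by (intro order.strict_trans2[OF _ radius]) simp
      then show ?thesis by (auto intro!: has_fps_expansion_diff eval_fps_has_fps_expansion)
    qed
    show "fps_nth (G l - fps_const (p $ l)) 0 = 0" for l
      using G0 by simp
    show "m \<le> j" and "fps_nth (G l - fps_const (p $ l)) m \<noteq> 0"
      using \<open>m \<in> {1..j}\<close> \<open>fps_nth (G l) m \<noteq> 0\<close> by auto
  qed
qed

lemma fps_curve_norm_bound:
  fixes U :: "real \<Rightarrow> real ^ 'n"
  assumes "\<And>l. (\<lambda>t. U t $ l) has_fps_expansion F l" and "\<And>l. fps_nth (F l) 0 = 0"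
  obtains K where "\<forall>\<^sub>F t in nhds 0. norm (U t) \<le> K * \<bar>t\<bar>"
proof -
  have "\<exists>K. \<forall>\<^sub>F t in nhds 0. \<bar>U t $ l\<bar> \<le> K * \<bar>t\<bar> ^ 1" for l
    using has_fps_expansion_upper_bound_power[OF assms(1)] assms(2) by (metis less_one)
  then obtain K where "\<And>l. \<forall>\<^sub>F t in nhds 0. \<bar>U t $ l\<bar> \<le> K l * \<bar>t\<bar>"
    using choice[of "\<lambda>l K. \<forall>\<^sub>F t in nhds 0. \<bar>U t $ l\<bar> \<le> K * \<bar>t\<bar>"] by auto
  then have "\<forall>\<^sub>F t in nhds 0. \<forall>l. \<bar>U t $ l\<bar> \<le> K l * \<bar>t\<bar>"
    by (rule eventually_all_finite)
  then have "\<forall>\<^sub>F t in nhds 0. norm (U t) \<le> (\<Sum>l\<in>UNIV. K l) * \<bar>t\<bar>"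
  proof eventually_elim
    case (elim t)
    have "norm (U t) \<le> (\<Sum>l\<in>UNIV. \<bar>U t $ l\<bar>)" by (rule norm_le_l1_cart)
    also have "\<dots> \<le> (\<Sum>l\<in>UNIV. K l * \<bar>t\<bar>)" using elim by (intro sum_mono) auto
    finally show ?case by (simp add: sum_distrib_right)
  qed
  then show ?thesis by (rule that)
qed

lemma fps_curve_tendsto_0:
  fixes U :: "real \<Rightarrow> real ^ 'n"
  assumes "\<And>l. (\<lambda>t. U t $ l) has_fps_expansion F l" and "\<And>l. fps_nth (F l) 0 = 0"
  shows "(U \<longlongrightarrow> 0) (nhds 0)"
proof -
  obtain K where "\<forall>\<^sub>F t in nhds 0. norm (U t) \<le> K * \<bar>t\<bar>"
    using fps_curve_norm_bound[OF assms] by blast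
  moreover have "((\<lambda>t. K * \<bar>t\<bar>) \<longlongrightarrow> 0) (nhds 0)"
    by (intro tendsto_mult_right_zero tendsto_rabs_zero filterlim_ident)
  ultimately show ?thesis by (rule Lim_null_comparison)
qed

lemma fps_curve_lower_bound:
  fixes U :: "real \<Rightarrow> real ^ 'n"
  assumes "(\<lambda>t. U t $ l) has_fps_expansion F" and "fps_nth F m \<noteq> 0" and "m \<le> j"
  obtains a where "a > 0" "\<forall>\<^sub>F t in nhds 0. a * \<bar>t\<bar> ^ j \<le> norm (U t)"
proof -
  have "F \<noteq> 0" using assms(2) by auto
  then obtain a where "a > 0" and a: "\<forall>\<^sub>F t in nhds 0. a * \<bar>t\<bar> ^ subdegree F \<le> \<bar>U t $ l\<bar>"
    by (rule has_fps_expansion_lower_bound_subdegree[OF assms(1)])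
  have "subdegree F \<le> j" using subdegree_leI[OF assms(2)] assms(3) by simp
  have "\<forall>\<^sub>F t in nhds 0. t \<in> ball 0 1"
    by (intro eventually_nhds_in_open) auto
  with a have "\<forall>\<^sub>F t in nhds 0. a * \<bar>t\<bar> ^ j \<le> norm (U t)"
  proof eventually_elim
    case (elim t)
    have "a * \<bar>t\<bar> ^ j \<le> a * \<bar>t\<bar> ^ subdegree F"
      using elim(2) \<open>a > 0\<close> \<open>subdegree F \<le> j\<close> by (intro mult_left_mono power_decreasing) auto
    also have "\<dots> \<le> norm (U t)"
      using elim(1) component_le_norm_cart[of "U t" l] by linarith
    finally show ?case .
  qed
  with \<open>a > 0\<close> show ?thesis by (rule that)
qed

section \<open>Truncated Taylor series\<close>

lemma finite_multi_indices_degree_less: "finite {\<alpha> :: 'n::finite \<Rightarrow> nat. sum \<alpha> UNIV < N}"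
proof (rule finite_subset)
  show "{\<alpha> :: 'n \<Rightarrow> nat. sum \<alpha> UNIV < N} \<subseteq> PiE UNIV (\<lambda>_. {..<N})"
  proof
    fix \<alpha> :: "'n \<Rightarrow> nat" assume "\<alpha> \<in> {\<alpha>. sum \<alpha> UNIV < N}"
    then have "\<alpha> i < N" for i using member_le_sum[of i UNIV \<alpha>] by simp
    then show "\<alpha> \<in> PiE UNIV (\<lambda>_. {..<N})" by (simp add: PiE_UNIV_domain)
  qed
qed (simp add: finite_PiE)

lemma abs_monomial_le_scaled:
  fixes h :: "real ^ 'n"
  assumes "\<And>i. \<bar>h $ i\<bar> \<le> M" and "M \<le> \<rho>" and "0 < \<rho>" and "N \<le> sum \<alpha> UNIV"
  shows "\<bar>\<Prod>i\<in>UNIV. (h $ i) ^ \<alpha> i\<bar> \<le> (M / \<rho>) ^ N * \<rho> ^ sum \<alpha> UNIV"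
proof -
  have "0 \<le> M" using assms(1) by (meson abs_ge_zero order_trans)
  have "\<bar>\<Prod>i\<in>UNIV. (h $ i) ^ \<alpha> i\<bar> = (\<Prod>i\<in>UNIV. \<bar>h $ i\<bar> ^ \<alpha> i)"
    by (simp add: abs_prod power_abs)
  also have "\<dots> \<le> (\<Prod>i\<in>UNIV. M ^ \<alpha> i)"
    using assms(1) by (intro prod_mono) (auto intro: power_mono)
  also have "\<dots> = M ^ sum \<alpha> UNIV"
    by (simp add: power_sum)
  also have "\<dots> = (M / \<rho>) ^ sum \<alpha> UNIV * \<rho> ^ sum \<alpha> UNIV"
    using \<open>0 < \<rho>\<close> by (simp add: power_divide)
  also have "\<dots> \<le> (M / \<rho>) ^ N * \<rho> ^ sum \<alpha> UNIV"
    using assms \<open>0 \<le> M\<close> by (intro mult_right_mono power_decreasing) auto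
  finally show ?thesis .
qed

lemma multi_power_series_tail_bound:
  fixes h :: "real ^ 'n" and c :: "('n \<Rightarrow> nat) \<Rightarrow> real"
  assumes series: "((\<lambda>\<alpha>. c \<alpha> * (\<Prod>i\<in>UNIV. (h $ i) ^ \<alpha> i)) has_sum e) UNIV"
    and majorant: "(\<lambda>\<alpha>. \<bar>c \<alpha> * \<rho> ^ sum \<alpha> UNIV\<bar>) summable_on UNIV"
    and "0 < \<rho>" and "norm h \<le> \<rho>"
  shows "\<bar>e - (\<Sum>\<alpha> | sum \<alpha> UNIV < N. c \<alpha> * (\<Prod>i\<in>UNIV. (h $ i) ^ \<alpha> i))\<bar>
    \<le> (\<Sum>\<^sub>\<infinity>\<alpha>. \<bar>c \<alpha> * \<rho> ^ sum \<alpha> UNIV\<bar>) / \<rho> ^ N * norm h ^ N"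
proof -
  define f where "f = (\<lambda>\<alpha>. c \<alpha> * (\<Prod>i\<in>UNIV. (h $ i) ^ \<alpha> i))"
  define g where "g = (\<lambda>\<alpha>. \<bar>c \<alpha> * \<rho> ^ sum \<alpha> UNIV\<bar>)"
  define B where "B = {\<alpha> :: 'n \<Rightarrow> nat. sum \<alpha> UNIV < N}"
  have f: "f summable_on UNIV" and e: "e = infsum f UNIV"
    using series by (auto simp: f_def has_sum_imp_summable infsumI)
  have fB: "f summable_on (-B)" and gB: "g summable_on (-B)"
    using majorant by (auto simp: g_def intro: summable_on_subset_banach[OF f] summable_on_subset_banach)
  have "finite B" unfolding B_def by (rule finite_multi_indices_degree_less)
  then have "e - sum f B = infsum f (-B)"
    using e infsum_Un_disjoint[OF summable_on_subset_banach[OF f] fB, of B] by simp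
  also have "\<bar>infsum f (-B)\<bar> \<le> infsum (\<lambda>\<alpha>. \<bar>f \<alpha>\<bar>) (-B)"
    using norm_infsum_bound[OF summable_on_iff_abs_summable_on_real[THEN iffD1, OF fB]] by simp
  also have "\<dots> \<le> infsum (\<lambda>\<alpha>. (norm h / \<rho>) ^ N * g \<alpha>) (-B)"
  proof (rule infsum_mono)
    show "(\<lambda>\<alpha>. \<bar>f \<alpha>\<bar>) summable_on - B"
      using summable_on_iff_abs_summable_on_real[THEN iffD1, OF fB] by simp
    show "(\<lambda>\<alpha>. (norm h / \<rho>) ^ N * g \<alpha>) summable_on - B"
      using gB by (rule summable_on_cmult_right)
    show "\<bar>f \<alpha>\<bar> \<le> (norm h / \<rho>) ^ N * g \<alpha>" if "\<alpha> \<in> - B" for \<alpha>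
    proof -
      have "\<bar>\<Prod>i\<in>UNIV. (h $ i) ^ \<alpha> i\<bar> \<le> (norm h / \<rho>) ^ N * \<rho> ^ sum \<alpha> UNIV"
        using that \<open>norm h \<le> \<rho>\<close> \<open>0 < \<rho>\<close>
        by (intro abs_monomial_le_scaled) (auto simp: B_def component_le_norm_cart)
      from mult_left_mono[OF this abs_ge_zero[of "c \<alpha>"]] show ?thesis
        using \<open>0 < \<rho>\<close> by (simp add: f_def g_def abs_mult mult_ac)
    qed
  qed
  also have "\<dots> = (norm h / \<rho>) ^ N * infsum g (-B)"
    by (rule infsum_cmult_right')
  also have "\<dots> \<le> (norm h / \<rho>) ^ N * infsum g UNIV"
    using \<open>0 < \<rho>\<close> majorant
    by (intro mult_left_mono infsum_mono_neutral[OF gB]) (auto simp: g_def)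
  finally show ?thesis
    by (simp add: f_def g_def B_def power_divide mult.commute)
qed

lemma real_analytic_at_taylor_bound:
  fixes E :: "real ^ 'n \<Rightarrow> real"
  assumes "real_analytic_at E p"
  obtains c C where "\<forall>\<^sub>F h in nhds 0.
    \<bar>E (p + h) - (\<Sum>\<alpha> | sum \<alpha> UNIV < N. c \<alpha> * (\<Prod>i\<in>UNIV. (h $ i) ^ \<alpha> i))\<bar> \<le> C * norm h ^ N"
proof -
  obtain r c where "r > 0"
    and series: "\<forall>x\<in>ball p r. ((\<lambda>\<alpha>. c \<alpha> * (\<Prod>i\<in>UNIV. (x $ i - p $ i) ^ \<alpha> i)) has_sum E x) UNIV"
    using assms unfolding real_analytic_at_def by blast
  \<comment> \<open>the series converges at the corner \<open>p + (\<rho>, \<dots>, \<rho>)\<close>, which yields a summable majorant\<close>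
  define \<rho> where "\<rho> = r / (2 * real CARD('n))"
  have "\<rho> > 0" using \<open>r > 0\<close> by (simp add: \<rho>_def)
  have "norm (\<chi> i::'n. \<rho>) \<le> (\<Sum>i\<in>UNIV. \<bar>(\<chi> i::'n. \<rho>) $ i\<bar>)" by (rule norm_le_l1_cart)
  also have "\<dots> = r / 2" using \<open>r > 0\<close> by (simp add: \<rho>_def)
  finally have "p + (\<chi> i. \<rho>) \<in> ball p r" using \<open>r > 0\<close> by (simp add: dist_norm)
  from series[rule_format, OF this]
  have "(\<lambda>\<alpha>. c \<alpha> * \<rho> ^ sum \<alpha> UNIV) summable_on UNIV"
    by (simp add: power_sum has_sum_imp_summable)
  from summable_on_iff_abs_summable_on_real[THEN iffD1, OF this]
  have majorant: "(\<lambda>\<alpha>. \<bar>c \<alpha> * \<rho> ^ sum \<alpha> UNIV\<bar>) summable_on UNIV" by simp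
  have "\<rho> \<le> r / 2"
    unfolding \<rho>_def using \<open>r > 0\<close> by (intro divide_left_mono) (auto simp: Suc_leI)
  have "\<forall>\<^sub>F h in nhds 0. h \<in> ball 0 \<rho>"
    using \<open>\<rho> > 0\<close> by (intro eventually_nhds_in_open) auto
  then have "\<forall>\<^sub>F h in nhds 0.
    \<bar>E (p + h) - (\<Sum>\<alpha> | sum \<alpha> UNIV < N. c \<alpha> * (\<Prod>i\<in>UNIV. (h $ i) ^ \<alpha> i))\<bar>
      \<le> (\<Sum>\<^sub>\<infinity>\<alpha>. \<bar>c \<alpha> * \<rho> ^ sum \<alpha> UNIV\<bar>) / \<rho> ^ N * norm h ^ N"
  proof eventually_elim
    case (elim h)
    then have "p + h \<in> ball p r" using \<open>\<rho> \<le> r / 2\<close> \<open>r > 0\<close> by (simp add: dist_norm)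
    from series[rule_format, OF this]
    have "((\<lambda>\<alpha>. c \<alpha> * (\<Prod>i\<in>UNIV. (h $ i) ^ \<alpha> i)) has_sum E (p + h)) UNIV"
      by simp
    from multi_power_series_tail_bound[OF this majorant \<open>\<rho> > 0\<close>] elim show ?case by simp
  qed
  then show ?thesis by (rule that)
qed

section \<open>Growth along a flex\<close>

lemma real_analytic_at_fps_curve_approx:
  fixes E :: "real ^ 'n \<Rightarrow> real" and U :: "real \<Rightarrow> real ^ 'n"
  assumes "real_analytic_at E p"
    and U: "\<And>l. (\<lambda>t. U t $ l) has_fps_expansion F l" "\<And>l. fps_nth (F l) 0 = 0"
  obtains H \<Phi> C where "H has_fps_expansion \<Phi>"
    "\<forall>\<^sub>F t in nhds 0. \<bar>E (p + U t) - H t\<bar> \<le> C * \<bar>t\<bar> ^ N"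
proof -
  obtain c C0 where taylor: "\<forall>\<^sub>F h in nhds 0.
    \<bar>E (p + h) - (\<Sum>\<alpha> | sum \<alpha> UNIV < N. c \<alpha> * (\<Prod>i\<in>UNIV. (h $ i) ^ \<alpha> i))\<bar> \<le> C0 * norm h ^ N"
    using real_analytic_at_taylor_bound[OF assms(1)] by blast
  obtain K where K: "\<forall>\<^sub>F t in nhds 0. norm (U t) \<le> K * \<bar>t\<bar>"
    using fps_curve_norm_bound[OF U] by blast
  define H where "H t = (\<Sum>\<alpha> | sum \<alpha> UNIV < N. c \<alpha> * (\<Prod>i\<in>UNIV. (U t $ i) ^ \<alpha> i))" for t
  have "H has_fps_expansion (\<Sum>\<alpha> | sum \<alpha> UNIV < N. fps_const (c \<alpha>) * (\<Prod>i\<in>UNIV. F i ^ \<alpha> i))"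
    unfolding H_def
    by (intro has_fps_expansion_sum has_fps_expansion_cmult_left
        has_fps_expansion_prod has_fps_expansion_power U)
  moreover have "\<forall>\<^sub>F t in nhds 0. \<bar>E (p + U t) - H t\<bar> \<le> (\<bar>C0\<bar> * K ^ N) * \<bar>t\<bar> ^ N"
    using eventually_compose_filterlim[OF taylor fps_curve_tendsto_0[OF U]] K
  proof eventually_elim
    case (elim t)
    have "\<bar>E (p + U t) - H t\<bar> \<le> C0 * norm (U t) ^ N"
      using elim(1) by (simp add: H_def)
    also have "\<dots> \<le> \<bar>C0\<bar> * norm (U t) ^ N"
      by (intro mult_right_mono) auto
    also have "\<dots> \<le> \<bar>C0\<bar> * (K * \<bar>t\<bar>) ^ N"
      using elim(2) by (intro mult_left_mono power_mono) auto
    finally show ?case by (simp add: power_mult_distrib mult_ac)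
  qed
  ultimately show ?thesis by (rule that)
qed

lemma local_min_imp_eventually_nonneg:
  fixes E :: "real ^ 'n \<Rightarrow> real"
  assumes "local_min E p" and "(U \<longlongrightarrow> 0) F"
  shows "\<forall>\<^sub>F t in F. 0 \<le> E (p + U t) - E p"
proof -
  obtain r where "r > 0" and r: "\<forall>x\<in>ball p r. E p \<le> E x"
    using assms(1) unfolding local_min_def by blast
  have "((\<lambda>t. p + U t) \<longlongrightarrow> p) F"
    using tendsto_add[OF tendsto_const assms(2)] by simp
  moreover have "\<forall>\<^sub>F x in nhds p. x \<in> ball p r"
    using \<open>r > 0\<close> by (intro eventually_nhds_in_open) auto
  ultimately have "\<forall>\<^sub>F t in F. p + U t \<in> ball p r"
    by (rule eventually_compose_filterlim[rotated])
  then show ?thesis by eventually_elim (use r in simp)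
qed

lemma local_min_flat_along_fps_curve:
  fixes E :: "real ^ 'n \<Rightarrow> real" and U :: "real \<Rightarrow> real ^ 'n"
  assumes "real_analytic_at E p" and "local_min E p" and "even n"
    and U: "\<And>l. (\<lambda>t. U t $ l) has_fps_expansion F l" "\<And>l. fps_nth (F l) 0 = 0"
    and flat: "((\<lambda>t. (E (p + U t) - E p) / t ^ n) \<longlongrightarrow> 0) (at_right 0)"
  obtains C where "\<forall>\<^sub>F t in nhds 0. E (p + U t) - E p \<le> C * \<bar>t\<bar> ^ (n + 2)"
proof -
  obtain H \<Phi> C0 where H: "H has_fps_expansion \<Phi>"
    and approx: "\<forall>\<^sub>F t in nhds 0. \<bar>E (p + U t) - H t\<bar> \<le> C0 * \<bar>t\<bar> ^ (n + 2)"
    by (rule real_analytic_at_fps_curve_approx[OF assms(1) U])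
  have H': "(\<lambda>t. H t - E p) has_fps_expansion \<Phi> - fps_const (E p)"
    using H by (intro has_fps_expansion_diff has_fps_expansion_const)
  have approx': "\<forall>\<^sub>F t in nhds 0. \<bar>(E (p + U t) - E p) - (H t - E p)\<bar> \<le> C0 * \<bar>t\<bar> ^ (n + 2)"
    using approx by simp
  have nonneg: "\<forall>\<^sub>F t in nhds 0. 0 \<le> E (p + U t) - E p"
    using assms(2) fps_curve_tendsto_0[OF U] by (rule local_min_imp_eventually_nonneg)
  obtain C where "\<forall>\<^sub>F t in nhds 0. \<bar>E (p + U t) - E p\<bar> \<le> C * \<bar>t\<bar> ^ (n + 2)"
    by (rule nonneg_flat_fps_approx_bound[OF H' \<open>even n\<close> approx' flat nonneg])
  then have "\<forall>\<^sub>F t in nhds 0. E (p + U t) - E p \<le> C * \<bar>t\<bar> ^ (n + 2)"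
    by eventually_elim simp
  then show ?thesis by (rule that)
qed

lemma power_le_powr_if_scaled_power_le:
  fixes t a y :: real
  assumes "0 \<le> t" "0 < a" "a * t ^ j \<le> y" "0 < j" "0 < N"
  shows "t ^ N \<le> (y / a) powr (real N / real j)"
proof (cases "t = 0")
  case True
  \<comment> \<open>\<open>0 < N\<close> is needed here: for \<open>y = 0\<close> the right-hand side is \<open>0 powr 0 = 0\<close>\<close>
  with \<open>0 < N\<close> show ?thesis by (simp add: zero_power)
next
  case False
  with \<open>0 \<le> t\<close> have "t > 0" by simp
  have "t ^ N = (t ^ j) powr (real N / real j)"
    using \<open>t > 0\<close> \<open>0 < j\<close> by (simp add: powr_realpow[symmetric] powr_powr)
  also have "\<dots> \<le> (y / a) powr (real N / real j)"
    using assms \<open>t > 0\<close> by (intro powr_mono2) (auto simp: pos_le_divide_eq mult.commute)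
  finally show ?thesis .
qed

lemma grows_sometimes_slowly_if_power_bounds:
  fixes E :: "real ^ 'n \<Rightarrow> real" and U :: "real \<Rightarrow> real ^ 'n"
  assumes "trajectory q p" and "0 < T" and qU: "\<And>t. t \<in> {0..T} \<Longrightarrow> q t = p + U t"
    and lower: "\<forall>\<^sub>F t in nhds 0. a * \<bar>t\<bar> ^ j \<le> norm (U t)" and "0 < a" "0 < j"
    and upper: "\<forall>\<^sub>F t in nhds 0. E (p + U t) - E p \<le> C * \<bar>t\<bar> ^ N" and "0 < N"
  shows "grows_sometimes_slowly (real N / real j) E p"
proof -
  define s where "s = real N / real j"
  define c2 where "c2 = (\<bar>C\<bar> + 1) / a powr s"
  have "\<forall>\<^sub>F t in nhds 0. 0 \<le> t \<longrightarrow> E (p + U t) - E p \<le> c2 * norm (U t) powr s"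
    using lower upper
  proof eventually_elim
    case (elim t)
    show ?case
    proof
      assume "0 \<le> t"
      have "E (p + U t) - E p \<le> C * t ^ N"
        using elim(2) \<open>0 \<le> t\<close> by simp
      also have "\<dots> \<le> (\<bar>C\<bar> + 1) * t ^ N"
        using \<open>0 \<le> t\<close> by (intro mult_right_mono) auto
      also have "\<dots> \<le> (\<bar>C\<bar> + 1) * (norm (U t) / a) powr s"
        using power_le_powr_if_scaled_power_le[OF \<open>0 \<le> t\<close> \<open>0 < a\<close> _ \<open>0 < j\<close> \<open>0 < N\<close>] elim(1) \<open>0 \<le> t\<close>
        by (intro mult_left_mono) (auto simp: s_def)
      also have "\<dots> = c2 * norm (U t) powr s"
        by (simp add: c2_def powr_divide)
      finally show "E (p + U t) - E p \<le> c2 * norm (U t) powr s" .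
    qed
  qed
  then obtain d where "d > 0" and d: "\<And>t. dist t 0 < d \<Longrightarrow> 0 \<le> t \<Longrightarrow> E (p + U t) - E p \<le> c2 * norm (U t) powr s"
    unfolding eventually_nhds_metric by blast
  have "\<forall>t\<in>{0..min (d / 2) T}. E (q t) - E p \<le> c2 * norm (q t - p) powr s"
    using d qU \<open>d > 0\<close> by (auto simp: dist_real_def)
  moreover have "c2 > 0" "min (d / 2) T > 0"
    using \<open>0 < a\<close> \<open>d > 0\<close> \<open>0 < T\<close> by (auto simp: c2_def)
  ultimately show ?thesis
    unfolding grows_sometimes_slowly_def s_def using \<open>trajectory q p\<close> by blast
qed

theorem lemma3p10:
  fixes E :: "real ^ 'n \<Rightarrow> real" and p :: "real ^ 'n" and j k :: nat
  assumes "real_analytic_at E p" and "local_min E p"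
    and "j \<ge> 1" and "k \<ge> 1"
    and "\<exists>q. E_flex j (2 * k) E p q"
  shows "grows_sometimes_slowly ((2 * real k + 2) / real j) E p"
proof -
  obtain q where traj: "trajectory q p" and "k_active j q"
    and van: "k_vanishing (2 * k) (\<lambda>t. E (q t))"
    using assms(5) unfolding E_flex_def by blast
  then have not_van: "\<not> k_vanishing j q" by (simp add: k_active_def)
  obtain T U F m l where "0 < T" and qU: "\<And>t. t \<in> {0..T} \<Longrightarrow> q t = p + U t"
    and U: "\<And>l. (\<lambda>t. U t $ l) has_fps_expansion F l" "\<And>l. fps_nth (F l) 0 = 0"
    and "m \<le> j" "fps_nth (F l) m \<noteq> 0"
    using trajectory_displacement_fps[OF traj not_van] by blast
  obtain a where "a > 0" and lower: "\<forall>\<^sub>F t in nhds 0. a * \<bar>t\<bar> ^ j \<le> norm (U t)"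
    by (rule fps_curve_lower_bound[OF U(1) \<open>fps_nth (F l) m \<noteq> 0\<close> \<open>m \<le> j\<close>])
  have "q 0 = p" using traj unfolding trajectory_def by blast
  have "\<forall>\<^sub>F t in at_right 0. (E (q t) - E (q 0)) / t ^ (2 * k) = (E (p + U t) - E p) / t ^ (2 * k)"
    using eventually_at_right_real[OF \<open>0 < T\<close>] by eventually_elim (simp add: qU \<open>q 0 = p\<close>)
  from tendsto_cong[THEN iffD1, OF this k_vanishing_imp_flat[OF van]]
  have flat: "((\<lambda>t. (E (p + U t) - E p) / t ^ (2 * k)) \<longlongrightarrow> 0) (at_right 0)" .
  obtain C where upper: "\<forall>\<^sub>F t in nhds 0. E (p + U t) - E p \<le> C * \<bar>t\<bar> ^ (2 * k + 2)"
    by (rule local_min_flat_along_fps_curve[OF assms(1,2) _ U flat]) simp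
  show ?thesis
    using grows_sometimes_slowly_if_power_bounds[OF traj \<open>0 < T\<close> qU lower \<open>a > 0\<close> _ upper] \<open>j \<ge> 1\<close>
    by (simp add: add.commute)
qed

end
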